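(* Let $G$ be an infinite group and $A\subseteq G$. Then: (i) for $n\in\mathbb{N}$, $A$ is not $n$-thin if and only if there exist a subset $F\subseteq G$ with $|F|=n+1$ and an injective sequence $(x_k)_{k<\omega}$ in $G$ such that $Fx_k\subseteq A$ for every $k\in\omega$; (ii) $A$ is not sparse if and only if there exist injective sequences $(x_n)_{n<\omega}$, $(y_n)_{n<\omega}$ in $G$ with $x_ny_m\in A$ for all $0\le n\le m<\omega$; (iii) $A$ is not scattered if and only if $A$ contains a piecewise shifted $FP$-set; (iv) $A$ contains a recurrent subset if and only if there exist $x\in A$ and an $FP$-set $Y$ with $xY\subseteq A$.
   Context: $A$ is $n$-thin if for all distinct $g_0,\dots,g_n\in G$ the set $g_0A\cap\dots\cap g_nA$ is finite. $A$ is sparse if for every infinite $X\subseteq G$ there is finite $F\subseteq X$ with $\bigcap_{g\in F}gA$ finite. Identify $\beta G$ with the ultrafilters on $G$ ($gp=\{gP:P\in p\}$), $G^*$ the free ultrafilters, $X^*=\{p\in G^*:X\in p\}$, $\Delta_p(X)=\{gp:g\in G, X\in gp\}$; $A$ is scattered if for every infinite $X\subseteq A$ there is $p\in X^*$ with $\Delta_p(X)$ finite. For an injective sequence $(g_n)_{n\in\omega}$ in $G$, the set $\{g_{i_1}g_{i_2}\cdots g_{i_k}: k\ge1, 0\le i_1<\dots<i_k<\omega\}$ is an $FP$-set; given additionally any sequence $(b_n)_{n\in\omega}$ in $G$, the set $\{g_{i_1}\cdots g_{i_k}b_{i_k}: k\ge1, 0\le i_1<\dots<i_k<\omega\}$ is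 a piecewise shifted $FP$-set. Identify $\mathcal{P}_G$ with $\{0,1\}^G$ (product topology) as a $G$-space via $(B,g)\mapsto Bg$; $B\subseteq G$ is recurrent if for every neighbourhood $U$ of $B$ in $\mathcal{P}_G$ the set $\{g\in G: Bg\in U\}$ is infinite. *)

theory Defs
  imports "HOL-Analysis.Analysis"
begin

text \<open>The group G is the (possibly non-commutative) type 'a of class group_add;
  the group operation is written +. Left translate gA and right translate Bg.\<close>

definition ltrans :: "'a::group_add \<Rightarrow> 'a set \<Rightarrow> 'a set" where
  "ltrans g A = (\<lambda>a. g + a) ` A"

definition rtrans :: "'a::group_add set \<Rightarrow> 'a \<Rightarrow> 'a set" where
  "rtrans B g = (\<lambda>b. b + g) ` B"

definition n_thin :: "nat \<Rightarrow> 'a::group_add set \<Rightarrow> bool" where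
  "n_thin n A \<longleftrightarrow>
     (\<forall>g::nat \<Rightarrow> 'a. inj_on g {..n} \<longrightarrow> finite (\<Inter>i\<in>{..n}. ltrans (g i) A))"

definition sparse :: "'a::group_add set \<Rightarrow> bool" where
  "sparse A \<longleftrightarrow>
     (\<forall>X. infinite X \<longrightarrow> (\<exists>F. F \<subseteq> X \<and> finite F \<and> finite (\<Inter>g\<in>F. ltrans g A)))"

definition ultrafilter_on :: "'a set set \<Rightarrow> bool" where
  "ultrafilter_on p \<longleftrightarrow>
     {} \<notin> p \<and> UNIV \<in> p \<and>
     (\<forall>X Y. X \<in> p \<and> Y \<in> p \<longrightarrow> X \<inter> Y \<in> p) \<and>
     (\<forall>X Y. X \<in> p \<and> X \<subseteq> Y \<longrightarrow> Y \<in> p) \<and>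
     (\<forall>X. X \<in> p \<or> - X \<in> p)"

definition free_uf :: "'a set set \<Rightarrow> bool" where
  "free_uf p \<longleftrightarrow> ultrafilter_on p \<and> (\<forall>X. finite X \<longrightarrow> X \<notin> p)"

definition uf_trans :: "'a::group_add \<Rightarrow> 'a set set \<Rightarrow> 'a set set" where
  "uf_trans g p = ltrans g ` p"

definition ustar :: "'a set \<Rightarrow> 'a set set set" where
  "ustar X = {p. free_uf p \<and> X \<in> p}"

definition Delta :: "'a::group_add set set \<Rightarrow> 'a set \<Rightarrow> 'a set set set" where
  "Delta p X = {uf_trans g p | g. X \<in> uf_trans g p}"

definition scattered :: "'a::group_add set \<Rightarrow> bool" where
  "scattered A \<longleftrightarrow>
     (\<forall>X. X \<subseteq> A \<and> infinite X \<longrightarrow> (\<exists>p\<in>ustar X. finite (Delta p X)))"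

text \<open>FP-set of a sequence g: products g_{i_1}...g_{i_k} with i_1 < ... < i_k, k \<ge> 1,
  encoded by strictly increasing nonempty index lists.\<close>
definition FP :: "(nat \<Rightarrow> 'a::group_add) \<Rightarrow> 'a set" where
  "FP g = {sum_list (map g is) | is. is \<noteq> [] \<and> sorted_wrt (<) is}"

definition PSFP :: "(nat \<Rightarrow> 'a::group_add) \<Rightarrow> (nat \<Rightarrow> 'a) \<Rightarrow> 'a set" where
  "PSFP g b = {sum_list (map g is) + b (last is) | is. is \<noteq> [] \<and> sorted_wrt (<) is}"

text \<open>P_G identified with {0,1}^G = 'a \<Rightarrow> bool with the product topology;
  a set B corresponds to its characteristic function.\<close>
definition recurrent :: "'a::group_add set \<Rightarrow> bool" where
  "recurrent B \<longleftrightarrow>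
     (\<forall>U::('a \<Rightarrow> bool) set.
        (\<exists>V. open V \<and> (\<lambda>x. x \<in> B) \<in> V \<and> V \<subseteq> U) \<longrightarrow>
        infinite {g. (\<lambda>x. x \<in> rtrans B g) \<in> U})"

end

theory Submission
  imports Defs
begin

lemma mem_ltrans: "y \<in> ltrans g A \<longleftrightarrow> - g + y \<in> A"
  unfolding ltrans_def by (auto simp: add.assoc[symmetric] intro!: image_eqI[where x = "- g + y"])

lemma mem_rtrans: "y \<in> rtrans B g \<longleftrightarrow> y - g \<in> B"
  unfolding rtrans_def by (auto simp: add.assoc intro!: image_eqI[where x = "y - g"])

lemma ltrans_ltrans: "ltrans a (ltrans b A) = ltrans (a + b) A"
  unfolding ltrans_def by (auto simp: image_image add.assoc)

lemma ltrans_zero [simp]: "ltrans 0 A = A"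
  unfolding ltrans_def by simp

lemma ltrans_empty [simp]: "ltrans g {} = {}"
  unfolding ltrans_def by simp

lemma ltrans_UNIV [simp]: "ltrans g UNIV = UNIV"
  by (auto simp: mem_ltrans)

lemma ltrans_Int: "ltrans g (A \<inter> B) = ltrans g A \<inter> ltrans g B"
  by (auto simp: mem_ltrans)

lemma ltrans_Compl: "ltrans g (- A) = - ltrans g A"
  by (auto simp: mem_ltrans)

lemma ltrans_mono: "A \<subseteq> B \<Longrightarrow> ltrans g A \<subseteq> ltrans g B"
  unfolding ltrans_def by auto

lemma finite_ltrans_iff [simp]: "finite (ltrans g A) \<longleftrightarrow> finite A"
  unfolding ltrans_def by (simp add: finite_image_iff inj_on_def)

lemma ltrans_insert: "ltrans g (insert a A) = insert (g + a) (ltrans g A)"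
  unfolding ltrans_def by simp

lemma mem_uf_trans: "X \<in> uf_trans g p \<longleftrightarrow> ltrans (- g) X \<in> p"
  unfolding uf_trans_def
  by (metis (no_types, lifting) add.right_inverse add.left_inverse image_iff ltrans_ltrans ltrans_zero)

lemma dependent_list_choice:
  assumes "\<And>xs. \<exists>x. Q xs x"
  shows "\<exists>f. \<forall>j. Q (map f [0..<j]) (f j)"
proof -
  define L where "L = rec_nat [] (\<lambda>_ xs. xs @ [SOME x. Q xs x])"
  define f where "f j = (SOME x. Q (L j) x)" for j
  have "L j = map f [0..<j]" for j
    by (induction j) (simp_all add: L_def f_def)
  moreover have "Q (L j) (f j)" for j
    unfolding f_def using assms by (rule someI_ex)
  ultimately show ?thesis by metis
qed

lemma inj_sequence_choice:
  assumes inf: "\<And>j f. infinite {x. Q j f x}"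
    and cong: "\<And>j f f'. (\<And>i. i < j \<Longrightarrow> f i = f' i) \<Longrightarrow> Q j f = Q j f'"
  obtains f :: "nat \<Rightarrow> 'a" where "inj f" "\<And>j. Q j f (f j)"
proof -
  have "\<exists>x. x \<notin> set xs \<and> Q (length xs) ((!) xs) x" for xs
  proof -
    have "infinite ({x. Q (length xs) ((!) xs) x} - set xs)"
      using inf by simp
    then show ?thesis
      using infinite_imp_nonempty by blast
  qed
  from dependent_list_choice[where Q = "\<lambda>xs x. x \<notin> set xs \<and> Q (length xs) ((!) xs) x", OF this]
  obtain f where f: "\<And>j. f j \<notin> set (map f [0..<j]) \<and> Q j ((!) (map f [0..<j])) (f j)"
    by auto
  have "inj f"
  proof (rule linorder_injI)
    fix i j :: nat
    assume "i < j"
    then have "f i \<in> set (map f [0..<j])"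
      by simp
    then show "f i \<noteq> f j"
      using f[of j] by auto
  qed
  moreover have "Q j f (f j)" for j
    using f[of j] cong[of j "(!) (map f [0..<j])" f] by simp
  ultimately show thesis by (rule that)
qed

lemma not_n_thin_iff:
  fixes A :: "'a::group_add set"
  shows "\<not> n_thin n A \<longleftrightarrow> (\<exists>F (x::nat \<Rightarrow> 'a). finite F \<and> card F = Suc n \<and> inj x \<and>
           (\<forall>k. (\<lambda>f. f + x k) ` F \<subseteq> A))"
proof
  assume "\<not> n_thin n A"
  then obtain g where g: "inj_on g {..n}" and I: "infinite (\<Inter>i\<in>{..n}. ltrans (g i) A)"
    unfolding n_thin_def by blast
  obtain x :: "nat \<Rightarrow> 'a" where x: "inj x" "range x \<subseteq> (\<Inter>i\<in>{..n}. ltrans (g i) A)"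
    using infinite_countable_subset[OF I] by blast
  define F where "F = (\<lambda>i. - g i) ` {..n}"
  have "inj_on (\<lambda>i. - g i) {..n}"
    using g by (auto simp: inj_on_def)
  then have "card F = Suc n"
    by (simp add: F_def card_image)
  moreover have "finite F"
    by (simp add: F_def)
  moreover have "(\<lambda>f. f + x k) ` F \<subseteq> A" for k
  proof -
    have "x k \<in> ltrans (g i) A" if "i \<le> n" for i
      using x(2) that by blast
    then show ?thesis
      by (auto simp: F_def mem_ltrans)
  qed
  ultimately show "\<exists>F (x::nat \<Rightarrow> 'a). finite F \<and> card F = Suc n \<and> inj x \<and> (\<forall>k. (\<lambda>f. f + x k) ` F \<subseteq> A)"
    using x(1) by (intro exI[of _ F] exI[of _ x]) simp
next
  assume "\<exists>F (x::nat \<Rightarrow> 'a). finite F \<and> card F = Suc n \<and> inj x \<and> (\<forall>k. (\<lambda>f. f + x k) ` F \<subseteq> A)"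
  then obtain F and x :: "nat \<Rightarrow> 'a" where F: "finite F" "card F = Suc n" "inj x"
    and FA: "\<And>k. (\<lambda>f. f + x k) ` F \<subseteq> A"
    by blast
  obtain e where e: "bij_betw e {..n} F"
    using finite_same_card_bij[of "{..n}" F] F by auto
  have "inj_on (\<lambda>i. - e i) {..n}"
    using e by (auto simp: inj_on_def bij_betw_def)
  moreover have "x k \<in> ltrans (- e i) A" if "i \<le> n" for i k
    using FA[of k] e that by (auto simp: mem_ltrans bij_betw_def)
  then have "range x \<subseteq> (\<Inter>i\<in>{..n}. ltrans (- e i) A)"
    by blast
  then have "infinite (\<Inter>i\<in>{..n}. ltrans (- e i) A)"
    using F(3) range_inj_infinite infinite_super by blast
  ultimately show "\<not> n_thin n A"
    unfolding n_thin_def by blast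
qed

lemma not_sparse_iff:
  fixes A :: "'a::group_add set"
  shows "\<not> sparse A \<longleftrightarrow> (\<exists>(x::nat \<Rightarrow> 'a) y. inj x \<and> inj y \<and> (\<forall>n m. n \<le> m \<longrightarrow> x n + y m \<in> A))"
proof
  assume "\<not> sparse A"
  then obtain X where X: "infinite X"
    and fip: "\<And>F. F \<subseteq> X \<Longrightarrow> finite F \<Longrightarrow> infinite (\<Inter>g\<in>F. ltrans g A)"
    unfolding sparse_def by blast
  obtain c :: "nat \<Rightarrow> 'a" where c: "inj c" "range c \<subseteq> X"
    using infinite_countable_subset[OF X] by blast
  define I where "I m = (\<Inter>i\<in>{..m}. ltrans (c i) A)" for m
  have infinite_I: "infinite (I m)" for m
    using fip[of "c ` {..m}"] c(2) by (simp add: I_def image_subset_iff)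
  obtain y :: "nat \<Rightarrow> 'a" where "inj y" and y: "\<And>m. y m \<in> I m"
    by (rule inj_sequence_choice[where Q = "\<lambda>m _ y. y \<in> I m"]) (simp_all add: infinite_I)
  moreover have "inj (\<lambda>n. - c n)"
    using c(1) by (simp add: inj_def)
  moreover have "- c n + y m \<in> A" if "n \<le> m" for n m
    using y[of m] that by (auto simp: I_def mem_ltrans)
  ultimately show "\<exists>(x::nat \<Rightarrow> 'a) y. inj x \<and> inj y \<and> (\<forall>n m. n \<le> m \<longrightarrow> x n + y m \<in> A)"
    by blast
next
  assume "\<exists>(x::nat \<Rightarrow> 'a) y. inj x \<and> inj y \<and> (\<forall>n m. n \<le> m \<longrightarrow> x n + y m \<in> A)"
  then obtain x y :: "nat \<Rightarrow> 'a" where "inj x" "inj y" and xy: "\<And>n m. n \<le> m \<Longrightarrow> x n + y m \<in> A"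
    by blast
  have "infinite (\<Inter>g\<in>F. ltrans g A)" if F: "F \<subseteq> range (\<lambda>n. - x n)" "finite F" for F
  proof -
    obtain C where C: "finite C" "F = (\<lambda>n. - x n) ` C"
      using finite_subset_image[OF F(2,1)] by blast
    have "y m \<in> ltrans (- x n) A" if "n \<in> C" "Max (insert 0 C) \<le> m" for n m
      using xy[of n m] C(1) that by (simp add: mem_ltrans)
    then have "y ` {Max (insert 0 C)..} \<subseteq> (\<Inter>g\<in>F. ltrans g A)"
      using C(2) by auto
    moreover have "infinite (y ` {Max (insert 0 C)..})"
      using \<open>inj y\<close> by (simp add: finite_image_iff inj_on_subset infinite_Ici)
    ultimately show ?thesis
      using infinite_super by blast
  qed
  moreover have "infinite (range (\<lambda>n. - x n))"
    using \<open>inj x\<close> by (simp add: range_inj_infinite inj_def)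
  ultimately show "\<not> sparse A"
    unfolding sparse_def by blast
qed

definition fin_sums_in :: "(nat \<Rightarrow> 'a::monoid_add) \<Rightarrow> nat set \<Rightarrow> 'a set" where
  "fin_sums_in f I = {sum_list (map f is) | is. sorted_wrt (<) is \<and> set is \<subseteq> I}"

lemma fin_sums_inI: "sorted_wrt (<) is \<Longrightarrow> set is \<subseteq> I \<Longrightarrow> sum_list (map f is) \<in> fin_sums_in f I"
  unfolding fin_sums_in_def by blast

lemma fin_sums_inE:
  assumes "s \<in> fin_sums_in f I"
  obtains "is" where "sorted_wrt (<) is" "set is \<subseteq> I" "s = sum_list (map f is)"
  using assms unfolding fin_sums_in_def by blast

lemma fin_sums_in_empty [simp]: "fin_sums_in f {} = {0}"
  unfolding fin_sums_in_def by auto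

lemma fin_sums_in_mono: "I \<subseteq> J \<Longrightarrow> fin_sums_in f I \<subseteq> fin_sums_in f J"
  unfolding fin_sums_in_def by blast

lemma fin_sums_in_cong: "(\<And>i. i \<in> I \<Longrightarrow> f i = f' i) \<Longrightarrow> fin_sums_in f I = fin_sums_in f' I"
  unfolding fin_sums_in_def by (metis (lifting) map_cong subset_iff)

lemma fin_sums_in_singleton: "fin_sums_in f {i} = {0, f i}"
proof (intro equalityI subsetI)
  fix s
  assume "s \<in> fin_sums_in f {i}"
  then obtain "is" where "is": "sorted_wrt (<) is" "set is \<subseteq> {i}" "s = sum_list (map f is)"
    by (rule fin_sums_inE)
  have "is = [] \<or> is = [i]"
  proof (cases "is")
    case (Cons a rest)
    then have "a = i" "\<forall>r\<in>set rest. r = i \<and> a < r"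
      using "is" by auto
    then have "rest = []"
      by (cases rest) auto
    then show ?thesis
      using Cons \<open>a = i\<close> by simp
  qed simp
  then show "s \<in> {0, f i}"
    using "is"(3) by auto
next
  fix s
  assume "s \<in> {0, f i}"
  then show "s \<in> fin_sums_in f {i}"
    using fin_sums_inI[of "[]" "{i}" f] fin_sums_inI[of "[i]" "{i}" f] by auto
qed

lemma sorted_list_split:
  fixes "is" :: "'a::preorder list"
  assumes "sorted_wrt (<) is" "set is \<subseteq> I \<union> J" "\<forall>i\<in>I. \<forall>j\<in>J. i < j"
  shows "\<exists>xs ys. is = xs @ ys \<and> set xs \<subseteq> I \<and> set ys \<subseteq> J"
  using assms(1,2)
proof (induction "is")
  case (Cons a rest)
  then obtain xs ys where rest: "rest = xs @ ys" "set xs \<subseteq> I" "set ys \<subseteq> J"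
    by auto
  show ?case
  proof (cases "a \<in> I")
    case True
    then show ?thesis
      using rest by (intro exI[of _ "a # xs"] exI[of _ ys]) simp
  next
    case False
    then have "a \<in> J"
      using Cons.prems(2) by simp
    have "xs = []"
    proof (rule ccontr)
      assume "xs \<noteq> []"
      then obtain r where r: "r \<in> set xs"
        by (cases xs) auto
      then have "a < r"
        using Cons.prems(1) rest(1) by simp
      moreover have "r < a"
        using r rest(2) assms(3) \<open>a \<in> J\<close> by blast
      ultimately show False
        by (rule less_asym)
    qed
    then show ?thesis
      using rest \<open>a \<in> J\<close> by (intro exI[of _ "[]"] exI[of _ "a # ys"]) simp
  qed
qed simp

lemma fin_sums_in_Un:
  assumes "\<forall>i\<in>I. \<forall>j\<in>J. i < j"
  shows "fin_sums_in f (I \<union> J) = {s + t | s t. s \<in> fin_sums_in f I \<and> t \<in> fin_sums_in f J}"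
proof (intro equalityI subsetI)
  fix u
  assume "u \<in> fin_sums_in f (I \<union> J)"
  then obtain "is" where "is": "sorted_wrt (<) is" "set is \<subseteq> I \<union> J" "u = sum_list (map f is)"
    by (rule fin_sums_inE)
  obtain xs ys where xs_ys: "is = xs @ ys" "set xs \<subseteq> I" "set ys \<subseteq> J"
    using sorted_list_split[OF "is"(1,2) assms] by blast
  then have "sum_list (map f xs) \<in> fin_sums_in f I" "sum_list (map f ys) \<in> fin_sums_in f J"
    using "is"(1) by (auto simp: sorted_wrt_append intro!: fin_sums_inI)
  moreover have "u = sum_list (map f xs) + sum_list (map f ys)"
    using "is"(3) xs_ys(1) by simp
  ultimately show "u \<in> {s + t | s t. s \<in> fin_sums_in f I \<and> t \<in> fin_sums_in f J}"
    by blast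
next
  fix u
  assume "u \<in> {s + t | s t. s \<in> fin_sums_in f I \<and> t \<in> fin_sums_in f J}"
  then obtain s t where u: "u = s + t" and "s \<in> fin_sums_in f I" "t \<in> fin_sums_in f J"
    by blast
  obtain xs where "sorted_wrt (<) xs" "set xs \<subseteq> I" "s = sum_list (map f xs)"
    using \<open>s \<in> fin_sums_in f I\<close> by (rule fin_sums_inE)
  moreover obtain ys where "sorted_wrt (<) ys" "set ys \<subseteq> J" "t = sum_list (map f ys)"
    using \<open>t \<in> fin_sums_in f J\<close> by (rule fin_sums_inE)
  moreover from calculation have "sorted_wrt (<) (xs @ ys)" "set (xs @ ys) \<subseteq> I \<union> J"
    using assms by (auto simp: sorted_wrt_append)
  ultimately show "u \<in> fin_sums_in f (I \<union> J)"
    using u fin_sums_inI[of "xs @ ys" "I \<union> J" f] by simp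
qed

lemma fin_sums_in_lessThan_Suc:
  "fin_sums_in f {..<Suc j} = fin_sums_in f {..<j} \<union> (\<lambda>s. s + f j) ` fin_sums_in f {..<j}"
proof -
  have "{..<Suc j} = {..<j} \<union> {j}"
    by auto
  then have "fin_sums_in f {..<Suc j} = {s + t | s t. s \<in> fin_sums_in f {..<j} \<and> t \<in> {0, f j}}"
    using fin_sums_in_Un[of "{..<j}" "{j}" f] by (simp only: fin_sums_in_singleton) simp
  also have "\<dots> = fin_sums_in f {..<j} \<union> (\<lambda>s. s + f j) ` fin_sums_in f {..<j}"
    by (auto simp: image_iff) (metis add.right_neutral)
  finally show ?thesis .
qed

lemma finite_fin_sums_in:
  assumes "finite I"
  shows "finite (fin_sums_in f I)"
proof -
  have "finite (fin_sums_in f {..<n})" for n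
    by (induction n) (simp_all add: fin_sums_in_lessThan_Suc)
  moreover obtain n where "I \<subseteq> {..<n}"
    using assms finite_nat_bounded by blast
  ultimately show ?thesis
    using fin_sums_in_mono finite_subset by metis
qed

lemma fin_sums_in_UNIV: "fin_sums_in f UNIV = (\<Union>n. fin_sums_in f {..<n})"
proof (intro equalityI subsetI)
  fix s
  assume "s \<in> fin_sums_in f UNIV"
  then obtain "is" where "sorted_wrt (<) is" "s = sum_list (map f is)"
    by (rule fin_sums_inE)
  moreover obtain n where "set is \<subseteq> {..<n}"
    using finite_nat_bounded[of "set is"] by blast
  ultimately show "s \<in> (\<Union>n. fin_sums_in f {..<n})"
    using fin_sums_inI by blast
qed (use fin_sums_in_mono in blast)

lemma fin_sums_in_subset_FP: "fin_sums_in g I \<subseteq> insert 0 (FP g)"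
proof
  fix s
  assume "s \<in> fin_sums_in g I"
  then obtain "is" where "sorted_wrt (<) is" "s = sum_list (map g is)"
    by (rule fin_sums_inE)
  then show "s \<in> insert 0 (FP g)"
    unfolding FP_def by (cases "is = []") auto
qed

lemma fin_sums_in_comp_strict_mono:
  assumes "strict_mono idx"
  shows "fin_sums_in (g \<circ> idx) I \<subseteq> fin_sums_in g (idx ` I)"
proof
  fix s
  assume "s \<in> fin_sums_in (g \<circ> idx) I"
  then obtain "is" where "sorted_wrt (<) is" "set is \<subseteq> I" "s = sum_list (map g (map idx is))"
    unfolding fin_sums_in_def by auto
  moreover have "sorted_wrt (<) (map idx is)"
    using calculation(1) assms by (auto simp: sorted_wrt_map strict_mono_def elim: sorted_wrt_mono_rel[rotated])
  moreover have "set (map idx is) \<subseteq> idx ` I"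
    using calculation(2) by auto
  ultimately show "s \<in> fin_sums_in g (idx ` I)"
    using fin_sums_inI[of "map idx is" "idx ` I" g] by simp
qed

lemma sorted_snoc_cases:
  "is \<noteq> [] \<and> sorted_wrt (<) is \<longleftrightarrow> (\<exists>xs j. is = xs @ [j] \<and> sorted_wrt (<) xs \<and> set xs \<subseteq> {..<j})"
  by (cases "is" rule: rev_cases) (auto simp: sorted_wrt_append)

lemma FP_eq: "FP g = {s + g j | s j. s \<in> fin_sums_in g {..<j}}"
proof (intro equalityI subsetI)
  fix u
  assume "u \<in> FP g"
  then obtain "is" where "is \<noteq> [] \<and> sorted_wrt (<) is" "u = sum_list (map g is)"
    unfolding FP_def by blast
  then obtain xs j where "sorted_wrt (<) xs" "set xs \<subseteq> {..<j}" "u = sum_list (map g xs) + g j"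
    unfolding sorted_snoc_cases by auto
  then show "u \<in> {s + g j | s j. s \<in> fin_sums_in g {..<j}}"
    using fin_sums_inI by blast
next
  fix u
  assume "u \<in> {s + g j | s j. s \<in> fin_sums_in g {..<j}}"
  then obtain xs j where "sorted_wrt (<) xs" "set xs \<subseteq> {..<j}" "u = sum_list (map g (xs @ [j]))"
    by (auto elim!: fin_sums_inE)
  then show "u \<in> FP g"
    unfolding FP_def using sorted_snoc_cases by blast
qed

context
  fixes p :: "'a set set"
  assumes uf: "ultrafilter_on p"
begin

lemma uf_mono: "X \<in> p \<Longrightarrow> X \<subseteq> Y \<Longrightarrow> Y \<in> p"
  using uf unfolding ultrafilter_on_def by blast

lemma uf_Int: "X \<in> p \<Longrightarrow> Y \<in> p \<Longrightarrow> X \<inter> Y \<in> p"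
  using uf unfolding ultrafilter_on_def by blast

lemma uf_empty: "{} \<notin> p"
  using uf unfolding ultrafilter_on_def by blast

lemma uf_UNIV: "UNIV \<in> p"
  using uf unfolding ultrafilter_on_def by blast

lemma uf_Compl_iff: "- X \<in> p \<longleftrightarrow> X \<notin> p"
  using uf uf_Int[of X "- X"] uf_empty unfolding ultrafilter_on_def by auto

lemma uf_UnD: "X \<union> Y \<in> p \<Longrightarrow> X \<in> p \<or> Y \<in> p"
  using uf_Int[of "X \<union> Y" "- X \<inter> - Y"] uf_Int[of "- X" "- Y"] uf_empty uf_Compl_iff
  by (metis Int_Un_distrib2 Int_absorb2 Int_commute compl_inf_bot inf_compl_bot_left2 sup_bot.eq_neutr_iff)

lemma uf_finite_UnionD:
  assumes "finite \<A>" "\<Union>\<A> \<in> p"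
  shows "\<exists>A\<in>\<A>. A \<in> p"
  using assms by (induction \<A> rule: finite_induct) (auto simp: uf_empty dest: uf_UnD)

end

text \<open>The three-colouring of the Cayley graph of a single translation; it shows that no
  ultrafilter is fixed by a nontrivial translation.\<close>

lemma translation_three_colouring:
  fixes e :: "'a::group_add"
  assumes "e \<noteq> 0"
  obtains P where "P \<inter> ltrans e P = {}" "P \<union> ltrans e P \<union> ltrans (- e) P = UNIV"
proof -
  let ?\<P> = "{P. P \<inter> ltrans e P = {}}"
  have "\<Union>C \<in> ?\<P>" if C: "subset.chain ?\<P> C" for C
  proof -
    have "z \<notin> ltrans e (\<Union>C)" if "z \<in> P\<^sub>1" "P\<^sub>1 \<in> C" for z P\<^sub>1
    proof
      assume "z \<in> ltrans e (\<Union>C)"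
      then obtain P\<^sub>2 where "- e + z \<in> P\<^sub>2" "P\<^sub>2 \<in> C"
        unfolding mem_ltrans by blast
      moreover have "P\<^sub>1 \<subseteq> P\<^sub>2 \<or> P\<^sub>2 \<subseteq> P\<^sub>1"
        using C \<open>P\<^sub>1 \<in> C\<close> \<open>P\<^sub>2 \<in> C\<close> by (simp add: subset_chain_def)
      moreover have "C \<subseteq> ?\<P>"
        using C by (simp add: subset_chain_def)
      ultimately obtain Q where "Q \<in> ?\<P>" "z \<in> Q" "- e + z \<in> Q"
        using \<open>P\<^sub>1 \<in> C\<close> \<open>z \<in> P\<^sub>1\<close> by blast
      then show False
        by (auto simp: disjoint_iff mem_ltrans)
    qed
    then show ?thesis
      by blast
  qed
  from subset_Zorn'[OF this]
  obtain P where P: "P \<in> ?\<P>" and max: "\<forall>Q\<in>?\<P>. P \<subseteq> Q \<longrightarrow> Q = P"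
    by (rule bexE)
  have cover: "x \<in> P \<or> - e + x \<in> P \<or> e + x \<in> P" for x
  proof (rule ccontr)
    assume x: "\<not> ?thesis"
    have "- e + y \<notin> insert x P" if y: "y \<in> insert x P" for y
    proof
      assume shifted: "- e + y \<in> insert x P"
      show False
      proof (cases "y = x")
        case True
        moreover have "- e + x \<noteq> x"
          using assms add_right_cancel[of "- e" x 0] by simp
        ultimately show False
          using shifted x by simp
      next
        case False
        then have "y \<in> P"
          using y by simp
        then have "- e + y \<notin> P"
          using P by (auto simp: mem_ltrans)
        then have "- e + y = x"
          using shifted by simp
        then have "e + x = y"
          using add_minus_cancel[of e y] by simp
        then show False
          using x \<open>y \<in> P\<close> by simp
      qed
    qed
    then have "insert x P \<in> ?\<P>"
      by (auto simp: mem_ltrans)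
    then show False
      using max x by blast
  qed
  have "x \<in> P \<union> ltrans e P \<union> ltrans (- e) P" for x
    using cover[of x] by (auto simp: mem_ltrans)
  then have "P \<union> ltrans e P \<union> ltrans (- e) P = UNIV"
    by blast
  with P show thesis
    by (intro that) simp_all
qed

lemma uf_trans_eq_iff:
  assumes uf: "ultrafilter_on p"
  shows "uf_trans c p = uf_trans d p \<longleftrightarrow> c = d"
proof
  assume eq: "uf_trans c p = uf_trans d p"
  define e where "e = - d + c"
  have shift: "ltrans e P \<in> p \<longleftrightarrow> P \<in> p" for P
    using eq[THEN arg_cong[where f = "\<lambda>q. ltrans c P \<in> q"]]
    by (simp add: mem_uf_trans ltrans_ltrans e_def add.assoc[symmetric])
  show "c = d"
  proof (rule ccontr)
    assume "c \<noteq> d"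
    then have "e \<noteq> 0"
      by (metis e_def add.right_neutral add_minus_cancel)
    then obtain P where P: "P \<inter> ltrans e P = {}" "P \<union> ltrans e P \<union> ltrans (- e) P = UNIV"
      by (rule translation_three_colouring)
    have "ltrans (- e) P \<in> p \<longleftrightarrow> P \<in> p"
      using shift[of "ltrans (- e) P"] by (simp add: ltrans_ltrans)
    then have "P \<in> p"
      using uf_UNIV[OF uf] P(2) shift[of P] uf_UnD[OF uf] by metis
    then have "P \<inter> ltrans e P \<in> p"
      using shift uf_Int[OF uf] by blast
    then show False
      using P(1) uf_empty[OF uf] by simp
  qed
qed simp

definition fip :: "'a set set \<Rightarrow> bool" where
  "fip \<F> \<longleftrightarrow> (\<forall>F\<subseteq>\<F>. finite F \<longrightarrow> \<Inter>F \<noteq> {})"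

lemma fip_insert_iff: "fip (insert Y \<F>) \<longleftrightarrow> (\<forall>F\<subseteq>\<F>. finite F \<longrightarrow> Y \<inter> \<Inter>F \<noteq> {})"
  unfolding fip_def
proof (intro iffI allI impI)
  fix F
  assume "\<forall>F\<subseteq>insert Y \<F>. finite F \<longrightarrow> \<Inter>F \<noteq> {}" "F \<subseteq> \<F>" "finite F"
  then have "\<Inter>(insert Y F) \<noteq> {}"
    by (meson finite_insert insert_mono)
  then show "Y \<inter> \<Inter>F \<noteq> {}"
    by simp
next
  fix F
  assume fip: "\<forall>F\<subseteq>\<F>. finite F \<longrightarrow> Y \<inter> \<Inter>F \<noteq> {}"
    and "F \<subseteq> insert Y \<F>" "finite F"
  then have "F - {Y} \<subseteq> \<F>" "finite (F - {Y})"
    by auto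
  then have "Y \<inter> \<Inter>(F - {Y}) \<noteq> {}"
    using fip by blast
  moreover have "Y \<inter> \<Inter>(F - {Y}) \<subseteq> \<Inter>F"
    by blast
  ultimately show "\<Inter>F \<noteq> {}"
    by blast
qed

lemma ultrafilter_extending_fip:
  assumes "fip \<F>"
  obtains p where "ultrafilter_on p" "\<F> \<subseteq> p"
proof -
  let ?\<M> = "{M. \<F> \<subseteq> M \<and> fip M}"
  have "\<Union>C \<in> ?\<M>" if C: "C \<noteq> {}" "subset.chain ?\<M> C" for C
  proof -
    have chain: "C \<subseteq> ?\<M>" "\<And>M N. M \<in> C \<Longrightarrow> N \<in> C \<Longrightarrow> M \<subseteq> N \<or> N \<subseteq> M"
      using C(2) by (simp_all add: subset_chain_def)
    obtain M\<^sub>0 where "M\<^sub>0 \<in> C"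
      using C(1) by blast
    then have "\<F> \<subseteq> \<Union>C"
      using chain(1) by blast
    moreover have "\<Inter>F \<noteq> {}" if F: "F \<subseteq> \<Union>C" "finite F" for F
    proof (cases "F = {}")
      case False
      then obtain M where "M \<in> C" "F \<subseteq> M"
        using finite_subset_Union_chain[OF F(2,1) C] by blast
      then show ?thesis
        using chain(1) F(2) by (auto simp: fip_def)
    qed simp
    ultimately show ?thesis
      unfolding fip_def by blast
  qed
  moreover have "?\<M> \<noteq> {}"
    using assms by blast
  ultimately obtain M where "M \<in> ?\<M>" and max: "\<forall>N\<in>?\<M>. M \<subseteq> N \<longrightarrow> N = M"
    using subset_Zorn_nonempty[of ?\<M>] by blast
  then have M: "\<F> \<subseteq> M" "fip M"
    by simp_all
  have add: "Y \<in> M" if "\<And>F. F \<subseteq> M \<Longrightarrow> finite F \<Longrightarrow> Y \<inter> \<Inter>F \<noteq> {}" for Y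
  proof -
    have "fip (insert Y M)"
      unfolding fip_insert_iff using that by blast
    then have "insert Y M \<in> ?\<M>"
      using M(1) by blast
    then have "insert Y M = M"
      using max by (simp add: subset_insertI)
    then show ?thesis
      by blast
  qed
  have nonempty: "\<Inter>F \<noteq> {}" if "F \<subseteq> M" "finite F" for F
    using M(2) that by (simp add: fip_def)
  have "ultrafilter_on M"
    unfolding ultrafilter_on_def
  proof (intro conjI allI impI)
    show "{} \<notin> M"
      using nonempty[of "{{}}"] by auto
    show "UNIV \<in> M"
      by (rule add) (simp add: nonempty)
    show "X \<inter> Y \<in> M" if "X \<in> M \<and> Y \<in> M" for X Y
    proof (rule add)
      fix F
      assume "F \<subseteq> M" "finite F"
      then show "X \<inter> Y \<inter> \<Inter>F \<noteq> {}"
        using nonempty[of "insert X (insert Y F)"] that by (simp add: Int_assoc)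
    qed
    show "Y \<in> M" if "X \<in> M \<and> X \<subseteq> Y" for X Y
    proof (rule add)
      fix F
      assume "F \<subseteq> M" "finite F"
      then show "Y \<inter> \<Inter>F \<noteq> {}"
        using nonempty[of "insert X F"] that by auto
    qed
    show "X \<in> M \<or> - X \<in> M" for X
    proof (rule ccontr)
      assume "\<not> ?thesis"
      then obtain F\<^sub>1 F\<^sub>2 where "F\<^sub>1 \<subseteq> M" "finite F\<^sub>1" "X \<inter> \<Inter>F\<^sub>1 = {}"
        and "F\<^sub>2 \<subseteq> M" "finite F\<^sub>2" "- X \<inter> \<Inter>F\<^sub>2 = {}"
        using add by meson
      moreover from calculation have "\<Inter>(F\<^sub>1 \<union> F\<^sub>2) \<noteq> {}"
        by (intro nonempty) auto
      ultimately show False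
        by blast
    qed
  qed
  then show thesis
    using M(1) by (rule that)
qed

lemma PSFP_eq: "PSFP g b = {s + g j + b j | s j. s \<in> fin_sums_in g {..<j}}"
proof (intro equalityI subsetI)
  fix u
  assume "u \<in> PSFP g b"
  then obtain "is" where "is \<noteq> [] \<and> sorted_wrt (<) is" "u = sum_list (map g is) + b (last is)"
    unfolding PSFP_def by blast
  then obtain xs j where "sorted_wrt (<) xs" "set xs \<subseteq> {..<j}" "u = sum_list (map g xs) + g j + b j"
    unfolding sorted_snoc_cases by auto
  then show "u \<in> {s + g j + b j | s j. s \<in> fin_sums_in g {..<j}}"
    using fin_sums_inI by blast
next
  fix u
  assume "u \<in> {s + g j + b j | s j. s \<in> fin_sums_in g {..<j}}"
  then obtain xs j where "sorted_wrt (<) xs" "set xs \<subseteq> {..<j}"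
    "u = sum_list (map g (xs @ [j])) + b (last (xs @ [j]))"
    by (auto simp: add.assoc elim!: fin_sums_inE)
  then show "u \<in> PSFP g b"
    unfolding PSFP_def using sorted_snoc_cases by blast
qed

lemma PSFP_memI: "s \<in> fin_sums_in g {..<j} \<Longrightarrow> s + g j + b j \<in> PSFP g b"
  unfolding PSFP_eq by blast

lemma infinite_PSFP:
  assumes "inj g"
  shows "infinite (PSFP g b)"
proof
  assume "finite (PSFP g b)"
  then have "finite ((\<lambda>(u, v). u - v) ` (PSFP g b \<times> PSFP g b))"
    by simp
  moreover have "g i \<in> (\<lambda>(u, v). u - v) ` (PSFP g b \<times> PSFP g b)" for i
  proof -
    define w where "w = g (Suc i) + b (Suc i)"
    have "0 \<in> fin_sums_in g {..<Suc i}" "g i \<in> fin_sums_in g {..<Suc i}"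
      using fin_sums_inI[of "[]" "{..<Suc i}" g] fin_sums_inI[of "[i]" "{..<Suc i}" g] by simp_all
    then have "0 + g (Suc i) + b (Suc i) \<in> PSFP g b" "g i + g (Suc i) + b (Suc i) \<in> PSFP g b"
      by (blast intro: PSFP_memI)+
    then have "w \<in> PSFP g b" "g i + w \<in> PSFP g b"
      by (simp_all add: w_def add.assoc)
    moreover have "g i = (g i + w) - w"
      by simp
    ultimately show ?thesis
      by (auto intro!: image_eqI[where x = "(g i + w, w)"])
  qed
  ultimately show False
    using assms finite_subset[of "range g"] range_inj_infinite by blast
qed

text \<open>The tails \<open>T\<close> of a piecewise shifted \<open>FP\<close>-set: a free ultrafilter on it contains a translate
  \<open>s T\<close> with \<open>s\<close> a finite sum below \<open>n\<close>, and then \<open>g\<^sub>i s\<^sup>-\<^sup>1 p\<close> contains it for all \<open>i < n\<close>.\<close>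

lemma PSFP_in_translates:
  assumes fr: "free_uf p" and X: "PSFP g b \<in> p"
  shows "\<exists>s. \<forall>i<n. PSFP g b \<in> uf_trans (g i - s) p"
proof -
  have uf: "ultrafilter_on p"
    using fr by (simp add: free_uf_def)
  define T where "T = {s + g j + b j | s j. n \<le> j \<and> s \<in> fin_sums_in g {n..<j}}"
  define F where "F = (\<lambda>(s, j). s + g j + b j) ` (fin_sums_in g {..<n} \<times> {..<n})"
  have split: "{..<j} = {..<n} \<union> {n..<j}" if "n \<le> j" for j
    using that by auto
  have "PSFP g b \<subseteq> F \<union> \<Union>((\<lambda>s. ltrans s T) ` fin_sums_in g {..<n})"
  proof
    fix u
    assume "u \<in> PSFP g b"
    then obtain s j where u: "u = s + g j + b j" and s: "s \<in> fin_sums_in g {..<j}"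
      unfolding PSFP_eq by blast
    show "u \<in> F \<union> \<Union>((\<lambda>s. ltrans s T) ` fin_sums_in g {..<n})"
    proof (cases "j < n")
      case True
      then have "s \<in> fin_sums_in g {..<n}"
        using s fin_sums_in_mono[of "{..<j}" "{..<n}"] by auto
      then have "u \<in> F"
        using True unfolding F_def u by (intro image_eqI[where x = "(s, j)"]) auto
      then show ?thesis
        by blast
    next
      case False
      then obtain s\<^sub>1 s\<^sub>2 where "s = s\<^sub>1 + s\<^sub>2" "s\<^sub>1 \<in> fin_sums_in g {..<n}" "s\<^sub>2 \<in> fin_sums_in g {n..<j}"
        using s split[of j] fin_sums_in_Un[of "{..<n}" "{n..<j}" g] by auto
      moreover have "s\<^sub>2 + g j + b j \<in> T"
        using False calculation(3) unfolding T_def not_less by blast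
      ultimately have "u \<in> ltrans s\<^sub>1 T"
        using u by (simp add: mem_ltrans add.assoc)
      then show ?thesis
        using \<open>s\<^sub>1 \<in> fin_sums_in g {..<n}\<close> by blast
    qed
  qed
  moreover have "finite F" "finite (fin_sums_in g {..<n})"
    unfolding F_def by (simp_all add: finite_fin_sums_in)
  ultimately obtain s where s: "s \<in> fin_sums_in g {..<n}" "ltrans s T \<in> p"
    using fr X uf_finite_UnionD[OF uf, of "insert F ((\<lambda>s. ltrans s T) ` fin_sums_in g {..<n})"]
      uf_mono[OF uf] unfolding free_uf_def by force
  have "ltrans (g i) T \<subseteq> PSFP g b" if "i < n" for i
  proof
    fix u
    assume "u \<in> ltrans (g i) T"
    then obtain t j where u: "u = g i + (t + g j + b j)" and "n \<le> j" "t \<in> fin_sums_in g {n..<j}"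
      unfolding T_def ltrans_def by blast
    moreover have "g i \<in> fin_sums_in g {i}"
      by (simp add: fin_sums_in_singleton)
    ultimately have "g i + t \<in> fin_sums_in g ({i} \<union> {n..<j})"
      using that fin_sums_in_Un[of "{i}" "{n..<j}" g] by auto
    also have "\<dots> \<subseteq> fin_sums_in g {..<j}"
      using that \<open>n \<le> j\<close> by (intro fin_sums_in_mono) auto
    finally show "u \<in> PSFP g b"
      using u PSFP_memI by (metis add.assoc)
  qed
  then have "ltrans (s - g i) (PSFP g b) \<in> p" if "i < n" for i
    using s(2) uf_mono[OF uf] ltrans_mono[of "ltrans (g i) T" "PSFP g b" "s - g i"] that
    by (simp add: ltrans_ltrans)
  then show ?thesis
    by (auto simp: mem_uf_trans)
qed

lemma infinite_Delta_PSFP: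
  assumes "inj g" and p: "p \<in> ustar (PSFP g b)"
  shows "infinite (Delta p (PSFP g b))"
proof
  assume fin: "finite (Delta p (PSFP g b))"
  have fr: "free_uf p" and X: "PSFP g b \<in> p"
    using p by (simp_all add: ustar_def)
  define n where "n = Suc (card (Delta p (PSFP g b)))"
  obtain s where s: "\<And>i. i < n \<Longrightarrow> PSFP g b \<in> uf_trans (g i - s) p"
    using PSFP_in_translates[OF fr X] by blast
  have "inj_on (\<lambda>i. uf_trans (g i - s) p) {..<n}"
  proof (rule inj_onI)
    fix i j
    assume "uf_trans (g i - s) p = uf_trans (g j - s) p"
    then have "g i - s = g j - s"
      using fr by (simp add: free_uf_def uf_trans_eq_iff)
    then have "g i = g j"
      by (metis diff_add_cancel)
    then show "i = j"
      using \<open>inj g\<close> by (simp add: inj_eq)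
  qed
  moreover have "(\<lambda>i. uf_trans (g i - s) p) ` {..<n} \<subseteq> Delta p (PSFP g b)"
  proof (rule image_subsetI)
    fix i
    assume "i \<in> {..<n}"
    then show "uf_trans (g i - s) p \<in> Delta p (PSFP g b)"
      using s[of i] unfolding Delta_def by blast
  qed
  ultimately have "card {..<n} \<le> card (Delta p (PSFP g b))"
    using fin by (rule card_inj_on_le)
  then show False
    by (simp add: n_def)
qed

lemma PSFP_not_scattered:
  assumes "inj g" "PSFP g b \<subseteq> A"
  shows "\<not> scattered A"
proof -
  have "\<forall>p\<in>ustar (PSFP g b). infinite (Delta p (PSFP g b))"
    using infinite_Delta_PSFP[OF assms(1)] by blast
  then show ?thesis
    using assms infinite_PSFP unfolding scattered_def by blast
qed

definition returns :: "'a::group_add set set \<Rightarrow> 'a set \<Rightarrow> 'a set" where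
  "returns p Y = {h. Y \<in> uf_trans h p}"

lemma mem_returns: "h \<in> returns p Y \<longleftrightarrow> ltrans (- h) Y \<in> p"
  by (simp add: returns_def mem_uf_trans)

lemma Delta_eq_image_returns: "Delta p X = (\<lambda>h. uf_trans h p) ` returns p X"
  unfolding Delta_def returns_def by blast

lemma returns_ltrans: "returns p (ltrans k E) = ltrans k (returns p E)"
  by (auto simp: mem_returns mem_ltrans ltrans_ltrans minus_add)

lemma returns_Int:
  "ultrafilter_on p \<Longrightarrow> returns p (Y \<inter> Z) = returns p Y \<inter> returns p Z"
  by (auto simp: mem_returns ltrans_Int uf_Int dest: uf_mono)

lemma returns_Compl: "ultrafilter_on p \<Longrightarrow> returns p (- Y) = - returns p Y"
  by (auto simp: mem_returns ltrans_Compl uf_Compl_iff)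

lemma returns_UNIV: "ultrafilter_on p \<Longrightarrow> returns p UNIV = UNIV"
  by (simp add: mem_returns uf_UNIV set_eq_iff)

lemma returns_empty: "ultrafilter_on p \<Longrightarrow> returns p {} = {}"
  by (simp add: mem_returns uf_empty set_eq_iff)

lemma free_uf_cofinite: "free_uf p \<Longrightarrow> finite (- C) \<Longrightarrow> C \<in> p"
  using uf_Compl_iff[of p C] by (auto simp: free_uf_def)

text \<open>Filter bases on the cofinite part of \<open>X\<close> such that every finer ultrafilter returns to each
  member along infinitely many translations; a maximal one is built by Zorn's lemma.\<close>

definition recurrence_base :: "'a::group_add set \<Rightarrow> 'a set set \<Rightarrow> bool" where
  "recurrence_base X M \<longleftrightarrow>
     (\<forall>C. finite (- C) \<longrightarrow> X \<inter> C \<in> M) \<and> (\<forall>A\<in>M. \<forall>B\<in>M. A \<inter> B \<in> M) \<and> {} \<notin> M \<and>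
     (\<forall>p. ultrafilter_on p \<and> M \<subseteq> p \<longrightarrow> (\<forall>Y\<in>M. infinite (returns p Y)))"

lemma recurrence_baseD:
  assumes "recurrence_base X M"
  shows "finite (- C) \<Longrightarrow> X \<inter> C \<in> M" "A \<in> M \<Longrightarrow> B \<in> M \<Longrightarrow> A \<inter> B \<in> M" "{} \<notin> M"
    and "ultrafilter_on q \<Longrightarrow> M \<subseteq> q \<Longrightarrow> Y \<in> M \<Longrightarrow> infinite (returns q Y)"
  using assms unfolding recurrence_base_def by blast+

lemma recurrence_base_cofinite:
  assumes "infinite X" and Delta: "\<forall>p\<in>ustar X. infinite (Delta p X)"
  shows "recurrence_base X {X \<inter> C | C. finite (- C)}"
  unfolding recurrence_base_def
proof (intro conjI allI impI ballI)
  show "X \<inter> C \<in> {X \<inter> C | C. finite (- C)}" if "finite (- C)" for C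
    using that by blast
  show "A \<inter> B \<in> {X \<inter> C | C. finite (- C)}"
    if AB: "A \<in> {X \<inter> C | C. finite (- C)}" "B \<in> {X \<inter> C | C. finite (- C)}" for A B
  proof -
    obtain C D where "A = X \<inter> C" "B = X \<inter> D" "finite (- C)" "finite (- D)"
      using AB by blast
    then have "A \<inter> B = X \<inter> (C \<inter> D)" "finite (- (C \<inter> D))"
      by auto
    then show ?thesis
      by blast
  qed
  show "{} \<notin> {X \<inter> C | C. finite (- C)}"
  proof
    assume "{} \<in> {X \<inter> C | C. finite (- C)}"
    then obtain C where "X \<subseteq> - C" "finite (- C)"
      by blast
    then show False
      using \<open>infinite X\<close> finite_subset by blast
  qed
  fix p Y
  assume p: "ultrafilter_on p \<and> {X \<inter> C | C. finite (- C)} \<subseteq> p"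
    and "Y \<in> {X \<inter> C | C. finite (- C)}"
  then obtain C where Y: "Y = X \<inter> C" "finite (- C)"
    by blast
  have cofinite: "D \<in> p" if "finite (- D)" for D
  proof -
    have "X \<inter> D \<in> p"
      using p that by blast
    then show ?thesis
      using uf_mono p by blast
  qed
  have "X \<inter> UNIV \<in> {X \<inter> C | C. finite (- C)}"
    by auto
  then have "X \<in> p"
    using p by auto
  moreover have "free_uf p"
    unfolding free_uf_def
  proof (intro conjI allI impI)
    show "K \<notin> p" if "finite K" for K
      using cofinite[of "- K"] that uf_Compl_iff[of p K] p by simp
  qed (use p in blast)
  ultimately have "p \<in> ustar X"
    by (simp add: ustar_def)
  then have "infinite ((\<lambda>h. uf_trans h p) ` returns p X)"
    using Delta by (simp add: Delta_eq_image_returns)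
  then have "infinite (returns p X)"
    using finite_imageI by blast
  moreover have "returns p C = UNIV"
    using Y(2) cofinite by (auto simp: mem_returns ltrans_Compl[symmetric])
  ultimately show "infinite (returns p Y)"
    using p Y(1) by (simp add: returns_Int)
qed

lemma recurrence_base_Union_chain:
  assumes "C \<noteq> {}" and chain: "subset.chain (Collect (recurrence_base X)) C"
  shows "recurrence_base X (\<Union>C)"
proof -
  have base: "recurrence_base X M" if "M \<in> C" for M
    using chain that by (auto simp: subset_chain_def)
  have comparable: "M \<subseteq> N \<or> N \<subseteq> M" if "M \<in> C" "N \<in> C" for M N
    using chain that by (auto simp: subset_chain_def)
  obtain M\<^sub>0 where "M\<^sub>0 \<in> C"
    using assms(1) by blast
  show ?thesis
    unfolding recurrence_base_def
  proof (intro conjI allI impI ballI)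
    show "X \<inter> D \<in> \<Union>C" if "finite (- D)" for D
      using base[OF \<open>M\<^sub>0 \<in> C\<close>] that \<open>M\<^sub>0 \<in> C\<close> unfolding recurrence_base_def by blast
    show "A \<inter> B \<in> \<Union>C" if AB: "A \<in> \<Union>C" "B \<in> \<Union>C" for A B
    proof -
      obtain M N where "M \<in> C" "N \<in> C" "A \<in> M" "B \<in> N"
        using AB by blast
      moreover from calculation have "A \<in> M \<union> N" "B \<in> M \<union> N" "M \<union> N \<in> C"
        using comparable[of M N] by (auto simp: sup_absorb1 sup_absorb2)
      ultimately show ?thesis
        using base[of "M \<union> N"] unfolding recurrence_base_def by blast
    qed
    show "{} \<notin> \<Union>C"
      using base unfolding recurrence_base_def by blast
    show "infinite (returns p Y)" if "ultrafilter_on p \<and> \<Union>C \<subseteq> p" "Y \<in> \<Union>C" for p Y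
      using base that unfolding recurrence_base_def by blast
  qed
qed

lemma subset_returns_extension:
  assumes "ultrafilter_on p"
  shows "M \<subseteq> {A \<inter> E | A E. A \<in> M \<and> finite (- returns p E)}"
proof
  fix A
  assume "A \<in> M"
  moreover have "finite (- returns p UNIV)"
    using assms by (simp add: returns_UNIV)
  ultimately have "A \<inter> UNIV \<in> {A \<inter> E | A E. A \<in> M \<and> finite (- returns p E)}"
    by blast
  then show "A \<in> {A \<inter> E | A E. A \<in> M \<and> finite (- returns p E)}"
    by simp
qed

lemma recurrence_base_extend:
  assumes M: "recurrence_base X M" and p: "ultrafilter_on p" "M \<subseteq> p"
  shows "recurrence_base X {A \<inter> E | A E. A \<in> M \<and> finite (- returns p E)}"
    (is "recurrence_base X ?M'")
  unfolding recurrence_base_def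
proof (intro conjI allI impI ballI)
  have M_sub: "M \<subseteq> ?M'"
    using p(1) by (rule subset_returns_extension)
  show "X \<inter> C \<in> ?M'" if "finite (- C)" for C
    using M_sub recurrence_baseD(1)[OF M that] by (rule subsetD)
  show "A \<inter> B \<in> ?M'" if AB: "A \<in> ?M'" "B \<in> ?M'" for A B
  proof -
    obtain A\<^sub>1 E\<^sub>1 A\<^sub>2 E\<^sub>2 where "A = A\<^sub>1 \<inter> E\<^sub>1" "B = A\<^sub>2 \<inter> E\<^sub>2" "A\<^sub>1 \<in> M" "A\<^sub>2 \<in> M"
      "finite (- returns p E\<^sub>1)" "finite (- returns p E\<^sub>2)"
      using AB by blast
    moreover from calculation have "A\<^sub>1 \<inter> A\<^sub>2 \<in> M" "finite (- returns p (E\<^sub>1 \<inter> E\<^sub>2))"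
      using recurrence_baseD(2)[OF M] p by (auto simp: returns_Int)
    moreover from calculation have "A \<inter> B = (A\<^sub>1 \<inter> A\<^sub>2) \<inter> (E\<^sub>1 \<inter> E\<^sub>2)"
      by auto
    ultimately show ?thesis
      by blast
  qed
  show "{} \<notin> ?M'"
  proof
    assume "{} \<in> ?M'"
    then obtain A E where "A \<inter> E = {}" "A \<in> M" "finite (- returns p E)"
      by blast
    moreover from calculation have "infinite (returns p A)"
      using recurrence_baseD(4)[OF M p] by blast
    ultimately have "returns p A \<inter> returns p E \<noteq> {}"
      using finite_subset[of "returns p A" "- returns p E"] by blast
    then show False
      using \<open>A \<inter> E = {}\<close> p by (simp add: returns_Int[symmetric] returns_empty)
  qed
  fix q Y
  assume q: "ultrafilter_on q \<and> ?M' \<subseteq> q" and "Y \<in> ?M'"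
  then obtain A E where Y: "Y = A \<inter> E" "A \<in> M" "finite (- returns p E)"
    by blast
  have "ltrans k E \<in> q" for k
  proof -
    have "finite (- returns p (ltrans k E))"
      using Y(3) by (simp add: returns_ltrans ltrans_Compl[symmetric])
    moreover have "X \<in> M"
      using recurrence_baseD(1)[OF M, of UNIV] by simp
    ultimately have "X \<inter> ltrans k E \<in> ?M'"
      by blast
    then show ?thesis
      using q uf_mono by blast
  qed
  then have "returns q E = UNIV"
    by (simp add: mem_returns set_eq_iff)
  moreover have "M \<subseteq> q"
    using M_sub conjunct2[OF q] by (rule order_trans)
  then have "infinite (returns q A)"
    using recurrence_baseD(4)[OF M conjunct1[OF q] _ Y(2)] by blast
  moreover have "returns q Y = returns q A \<inter> returns q E"
    using returns_Int[OF conjunct1[OF q]] Y(1) by blast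
  ultimately show "infinite (returns q Y)"
    by simp
qed

lemma maximal_recurrence_base_returns:
  assumes M: "recurrence_base X M" and max: "\<And>N. recurrence_base X N \<Longrightarrow> M \<subseteq> N \<Longrightarrow> N = M"
    and p: "ultrafilter_on p" "M \<subseteq> p" and "Y \<in> p"
  shows "infinite (returns p Y)"
proof
  assume "finite (returns p Y)"
  then have "finite (- returns p (- Y))"
    using p(1) by (simp add: returns_Compl)
  moreover have "X \<in> M"
    using recurrence_baseD(1)[OF M, of UNIV] by simp
  ultimately have "X \<inter> - Y \<in> {A \<inter> E | A E. A \<in> M \<and> finite (- returns p E)}"
    by blast
  also have "\<dots> = M"
    using max recurrence_base_extend[OF M p] subset_returns_extension[OF p(1)] by blast
  finally have "X \<inter> - Y \<inter> Y \<in> p"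
    using p \<open>Y \<in> p\<close> uf_Int by blast
  then show False
    using uf_empty[OF p(1)] by simp
qed

lemma fip_if_Int_closed:
  assumes "\<And>A B. A \<in> M \<Longrightarrow> B \<in> M \<Longrightarrow> A \<inter> B \<in> M" "{} \<notin> M"
  shows "fip M"
  unfolding fip_def
proof (intro allI impI)
  fix F
  assume F: "F \<subseteq> M" "finite F"
  show "\<Inter>F \<noteq> {}"
  proof (cases "F = {}")
    case False
    from F(2) this F(1) have "\<Inter>F \<in> M"
    proof (induction F rule: finite_ne_induct)
      case (insert A F)
      then show ?case
        using assms(1) by simp
    qed simp
    show ?thesis
    proof
      assume "\<Inter>F = {}"
      with \<open>\<Inter>F \<in> M\<close> assms(2) show False
        by simp
    qed
  qed simp
qed

lemma recurrent_ultrafilter_exists: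
  assumes "infinite X" "\<forall>p\<in>ustar X. infinite (Delta p X)"
  obtains p where "ultrafilter_on p" "X \<in> p" "\<forall>Y\<in>p. infinite (returns p Y)"
proof -
  have "Collect (recurrence_base X) \<noteq> {}"
    using recurrence_base_cofinite[OF assms] by blast
  moreover have "\<Union>C \<in> Collect (recurrence_base X)"
    if "C \<noteq> {}" "subset.chain (Collect (recurrence_base X)) C" for C
    using recurrence_base_Union_chain[OF that] by simp
  ultimately obtain M where M: "recurrence_base X M"
    and max: "\<forall>N\<in>Collect (recurrence_base X). M \<subseteq> N \<longrightarrow> N = M"
    using subset_Zorn_nonempty[of "Collect (recurrence_base X)"] by auto
  have "fip M"
    using recurrence_baseD(2,3)[OF M] by (rule fip_if_Int_closed)
  then obtain p where p: "ultrafilter_on p" "M \<subseteq> p"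
    by (rule ultrafilter_extending_fip)
  have "X \<in> p"
    using recurrence_baseD(1)[OF M, of UNIV] p(2) by auto
  moreover have "\<forall>Y\<in>p. infinite (returns p Y)"
    using maximal_recurrence_base_returns[OF M _ p] max by blast
  ultimately show thesis
    by (rule that[OF p(1)])
qed

lemma PSFP_in_recurrent_ultrafilter:
  assumes p: "ultrafilter_on p" "X \<in> p" and recurrent: "\<forall>Y\<in>p. infinite (returns p Y)"
  obtains g b where "inj g" "PSFP g b \<subseteq> X"
proof -
  define Z where "Z g j = {y. \<forall>s\<in>fin_sums_in g {..<j}. s + y \<in> X}" for g :: "nat \<Rightarrow> 'a" and j
  have infinite_choices: "infinite {x. Z g j \<in> p \<longrightarrow> x \<in> returns p (Z g j)}" for g j
  proof (cases "Z g j \<in> p")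
    case True
    then show ?thesis
      using recurrent by simp
  next
    case False
    have "infinite (returns p X)"
      using recurrent p(2) by blast
    then have "infinite (UNIV :: 'a set)"
      by (rule infinite_super[OF subset_UNIV])
    with False show ?thesis
      by simp
  qed
  have Z_cong: "Z g j = Z g' j" if "\<And>i. i < j \<Longrightarrow> g i = g' i" for g g' j
    using fin_sums_in_cong[of "{..<j}" g g'] that by (simp add: Z_def)
  obtain g where "inj g" and g: "\<And>j. Z g j \<in> p \<longrightarrow> g j \<in> returns p (Z g j)"
  proof (rule inj_sequence_choice[where Q = "\<lambda>j g x. Z g j \<in> p \<longrightarrow> x \<in> returns p (Z g j)"])
    show "\<And>j g. infinite {x. Z g j \<in> p \<longrightarrow> x \<in> returns p (Z g j)}"
      by (rule infinite_choices)
    show "(\<lambda>x. Z g j \<in> p \<longrightarrow> x \<in> returns p (Z g j)) = (\<lambda>x. Z g' j \<in> p \<longrightarrow> x \<in> returns p (Z g' j))"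
      if "\<And>i. i < j \<Longrightarrow> g i = g' i" for j g g'
      using Z_cong[OF that] by simp
  qed (rule that)
  have Z_in: "Z g j \<in> p" for j
  proof (induction j)
    case 0
    then show ?case
      using p(2) by (simp add: Z_def)
  next
    case (Suc j)
    then have "Z g j \<inter> ltrans (- g j) (Z g j) \<in> p"
      using g[of j] Suc p(1) by (simp add: mem_returns uf_Int)
    moreover have "Z g j \<inter> ltrans (- g j) (Z g j) \<subseteq> Z g (Suc j)"
      by (auto simp: Z_def mem_ltrans fin_sums_in_lessThan_Suc add.assoc)
    ultimately show ?case
      using p(1) uf_mono by blast
  qed
  have "Z g j \<noteq> {}" for j
    using Z_in[of j] uf_empty[OF p(1)] by auto
  then have "some_elem (Z g j) \<in> Z g j" for j
    by (rule some_elem_nonempty)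
  then have "PSFP g (\<lambda>j. - g j + some_elem (Z g j)) \<subseteq> X"
    by (auto simp: PSFP_eq Z_def add.assoc)
  then show thesis
    by (rule that[OF \<open>inj g\<close>])
qed

lemma not_scattered_iff:
  fixes A :: "'a::group_add set"
  shows "\<not> scattered A \<longleftrightarrow> (\<exists>(g::nat \<Rightarrow> 'a) b. inj g \<and> PSFP g b \<subseteq> A)"
proof
  assume "\<not> scattered A"
  then obtain X where X: "X \<subseteq> A" "infinite X" "\<forall>p\<in>ustar X. infinite (Delta p X)"
    unfolding scattered_def by blast
  obtain p where "ultrafilter_on p" "X \<in> p" "\<forall>Y\<in>p. infinite (returns p Y)"
    by (rule recurrent_ultrafilter_exists[OF X(2,3)])
  then obtain g b where "inj g" "PSFP g b \<subseteq> X"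
    by (rule PSFP_in_recurrent_ultrafilter)
  then show "\<exists>(g::nat \<Rightarrow> 'a) b. inj g \<and> PSFP g b \<subseteq> A"
    using X(1) by blast
qed (use PSFP_not_scattered in blast)

lemma open_cylinder:
  assumes "finite K"
  shows "open {f::'a \<Rightarrow> bool. \<forall>k\<in>K. f k = (k \<in> B)}"
proof -
  have "open {f::'a \<Rightarrow> bool. \<forall>i\<in>K. f (id i) \<in> {i \<in> B}}"
    by (rule product_topology_basis'[OF assms]) (rule open_discrete)
  moreover have "{f::'a \<Rightarrow> bool. \<forall>i\<in>K. f (id i) \<in> {i \<in> B}} = {f. \<forall>k\<in>K. f k = (k \<in> B)}"
    by simp
  ultimately show ?thesis by simp
qed

lemma cylinder_subset_nhd:
  assumes V: "open V" and BV: "(\<lambda>x. x \<in> B) \<in> V"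
  shows "\<exists>K. finite K \<and> {f. \<forall>k\<in>K. f k = (k \<in> B)} \<subseteq> V"
proof -
  have "openin (product_topology (\<lambda>i. euclidean) UNIV) V" using V unfolding open_fun_def .
  from product_topology_open_contains_basis[OF this BV] obtain X where
    X: "(\<lambda>x. x \<in> B) \<in> Pi\<^sub>E UNIV X" "\<And>i. openin euclidean (X i)"
       "finite {i. X i \<noteq> topspace euclidean}" "Pi\<^sub>E UNIV X \<subseteq> V" by blast
  define K where "K = {i. X i \<noteq> UNIV}"
  have "finite K" using X(3) unfolding K_def by simp
  moreover have "{f. \<forall>k\<in>K. f k = (k \<in> B)} \<subseteq> V"
  proof
    fix f :: "'a \<Rightarrow> bool" assume f: "f \<in> {f. \<forall>k\<in>K. f k = (k \<in> B)}"
    have "f i \<in> X i" for i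
    proof (cases "i \<in> K")
      case True
      then have "f i = (i \<in> B)" using f by blast
      moreover have "(i \<in> B) \<in> X i" using X(1) by (auto simp: PiE_iff)
      ultimately show ?thesis by simp
    next
      case False then show ?thesis unfolding K_def by simp
    qed
    then have "f \<in> Pi\<^sub>E UNIV X" by (simp add: PiE_iff)
    then show "f \<in> V" using X(4) by blast
  qed
  ultimately show ?thesis by blast
qed

lemma recurrent_iff_finite_agreement:
  "recurrent B \<longleftrightarrow> (\<forall>K. finite K \<longrightarrow> infinite {g. \<forall>k\<in>K. (k \<in> rtrans B g) = (k \<in> B)})"
proof
  assume r: "recurrent B"
  show "\<forall>K. finite K \<longrightarrow> infinite {g. \<forall>k\<in>K. (k \<in> rtrans B g) = (k \<in> B)}"
  proof (intro allI impI)
    fix K :: "'a set" assume K: "finite K"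
    let ?U = "{f::'a \<Rightarrow> bool. \<forall>k\<in>K. f k = (k \<in> B)}"
    have "\<exists>V. open V \<and> (\<lambda>x. x \<in> B) \<in> V \<and> V \<subseteq> ?U" using open_cylinder[OF K, of B] by blast
    then have "infinite {g. (\<lambda>x. x \<in> rtrans B g) \<in> ?U}" using r unfolding recurrent_def by blast
    then show "infinite {g. \<forall>k\<in>K. (k \<in> rtrans B g) = (k \<in> B)}" by simp
  qed
next
  assume a: "\<forall>K. finite K \<longrightarrow> infinite {g. \<forall>k\<in>K. (k \<in> rtrans B g) = (k \<in> B)}"
  show "recurrent B" unfolding recurrent_def
  proof (intro allI impI)
    fix U :: "('a \<Rightarrow> bool) set" assume "\<exists>V. open V \<and> (\<lambda>x. x \<in> B) \<in> V \<and> V \<subseteq> U"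
    then obtain V where V: "open V" "(\<lambda>x. x \<in> B) \<in> V" "V \<subseteq> U" by blast
    obtain K where K: "finite K" "{f. \<forall>k\<in>K. f k = (k \<in> B)} \<subseteq> V" using cylinder_subset_nhd[OF V(1,2)] by blast
    have "{g. \<forall>k\<in>K. (k \<in> rtrans B g) = (k \<in> B)} \<subseteq> {g. (\<lambda>x. x \<in> rtrans B g) \<in> U}"
      using K(2) V(3) by auto
    then show "infinite {g. (\<lambda>x. x \<in> rtrans B g) \<in> U}" using a K(1) infinite_super by blast
  qed
qed

lemma FP_translate_in_recurrent:
  assumes rec: "recurrent B" and "x \<in> B"
  obtains h where "inj h" "(\<lambda>y. x + y) ` FP h \<subseteq> B"
proof -
  have agree: "infinite {g. \<forall>k\<in>K. (k \<in> rtrans B g) = (k \<in> B)}" if "finite K" for K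
    using rec that unfolding recurrent_iff_finite_agreement by blast
  define K where "K h j = (\<lambda>s. x + s) ` fin_sums_in h {..<j}" for h :: "nat \<Rightarrow> 'a" and j
  have infinite_choices: "infinite {y. K h j \<subseteq> B \<longrightarrow> (\<forall>k\<in>K h j. k + y \<in> B)}" for h j
  proof (cases "K h j \<subseteq> B")
    case True
    let ?G = "{g. \<forall>k\<in>K h j. (k \<in> rtrans B g) = (k \<in> B)}"
    have "finite (K h j)"
      by (simp add: K_def finite_fin_sums_in)
    then have "infinite ?G"
      by (rule agree)
    then have "infinite (uminus ` ?G)"
      by (simp add: finite_image_iff inj_on_def)
    moreover have "uminus ` ?G \<subseteq> {y. \<forall>k\<in>K h j. k + y \<in> B}"
      using True by (auto simp: mem_rtrans)
    ultimately have "infinite {y. \<forall>k\<in>K h j. k + y \<in> B}"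
      by (simp add: infinite_super)
    with True show ?thesis
      by simp
  next
    case False
    have "infinite {g. \<forall>k\<in>{}. (k \<in> rtrans B g) = (k \<in> B)}"
      by (rule agree) simp
    then have "infinite (UNIV :: 'a set)"
      by simp
    with False show ?thesis
      by simp
  qed
  have K_cong: "K h j = K h' j" if "\<And>i. i < j \<Longrightarrow> h i = h' i" for h h' j
    using fin_sums_in_cong[of "{..<j}" h h'] that by (simp add: K_def)
  obtain h where "inj h" and h: "\<And>j. K h j \<subseteq> B \<longrightarrow> (\<forall>k\<in>K h j. k + h j \<in> B)"
  proof (rule inj_sequence_choice[where Q = "\<lambda>j h y. K h j \<subseteq> B \<longrightarrow> (\<forall>k\<in>K h j. k + y \<in> B)"])
    show "\<And>j h. infinite {y. K h j \<subseteq> B \<longrightarrow> (\<forall>k\<in>K h j. k + y \<in> B)}"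
      by (rule infinite_choices)
    show "(\<lambda>y. K h j \<subseteq> B \<longrightarrow> (\<forall>k\<in>K h j. k + y \<in> B)) = (\<lambda>y. K h' j \<subseteq> B \<longrightarrow> (\<forall>k\<in>K h' j. k + y \<in> B))"
      if "\<And>i. i < j \<Longrightarrow> h i = h' i" for j h h'
      using K_cong[OF that] by simp
  qed (rule that)
  have K_sub: "K h j \<subseteq> B" for j
  proof (induction j)
    case 0
    then show ?case
      using \<open>x \<in> B\<close> by (simp add: K_def)
  next
    case (Suc j)
    then show ?case
      using h[of j] by (auto simp: K_def fin_sums_in_lessThan_Suc add.assoc)
  qed
  have "(\<lambda>y. x + y) ` FP h \<subseteq> B"
  proof
    fix u
    assume "u \<in> (\<lambda>y. x + y) ` FP h"
    then obtain s j where u: "u = (x + s) + h j" and "s \<in> fin_sums_in h {..<j}"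
      unfolding FP_eq by (auto simp: add.assoc)
    then have "x + s \<in> K h j"
      unfolding K_def by blast
    then show "u \<in> B"
      using h[of j] K_sub[of j] u by blast
  qed
  with \<open>inj h\<close> show thesis
    by (rule that)
qed

text \<open>For a fixed sequence \<open>f\<close>, the elements \<open>k\<close> with \<open>k + f m\<close> a finite sum over indices below
  \<open>j\<close> and \<open>m < j\<close>, and the values of \<open>f j\<close> that would let such a \<open>k\<close> enter only at stage \<open>j\<close>.\<close>

definition shifted_sums :: "(nat \<Rightarrow> 'a::group_add) \<Rightarrow> nat \<Rightarrow> 'a set" where
  "shifted_sums f j = (\<lambda>(s, m). s - f m) ` (fin_sums_in f {..<j} \<times> {..<j})"

definition obstructions :: "(nat \<Rightarrow> 'a::group_add) \<Rightarrow> nat \<Rightarrow> 'a set" where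
  "obstructions f j =
     (\<lambda>(v, s). - v + s) ` (shifted_sums f j \<times> fin_sums_in f {..<j}) \<union>
     (\<lambda>(s, v, m). - s + v + f m) ` (fin_sums_in f {..<j} \<times> shifted_sums f j \<times> {..<j})"

lemma shifted_sumsI: "s \<in> fin_sums_in f {..<j} \<Longrightarrow> m < j \<Longrightarrow> s - f m \<in> shifted_sums f j"
  unfolding shifted_sums_def by (rule image_eqI[where x = "(s, m)"]) auto

lemma obstructionsI1: "v \<in> shifted_sums f j \<Longrightarrow> s \<in> fin_sums_in f {..<j} \<Longrightarrow> - v + s \<in> obstructions f j"
  unfolding obstructions_def by (rule UnI1, rule image_eqI[where x = "(v, s)"]) auto

lemma obstructionsI2:
  "s \<in> fin_sums_in f {..<j} \<Longrightarrow> v \<in> shifted_sums f j \<Longrightarrow> m < j \<Longrightarrow> - s + v + f m \<in> obstructions f j"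
  unfolding obstructions_def by (rule UnI2, rule image_eqI[where x = "(s, v, m)"]) auto

lemma shifted_sums_mono: "i \<le> j \<Longrightarrow> shifted_sums f i \<subseteq> shifted_sums f j"
  unfolding shifted_sums_def using fin_sums_in_mono[of "{..<i}" "{..<j}" f] by (intro image_mono) auto

lemma finite_obstructions: "finite (obstructions f j)"
  by (simp add: obstructions_def shifted_sums_def finite_fin_sums_in)

lemma obstructions_cong:
  assumes "\<And>i. i < j \<Longrightarrow> f i = f' i"
  shows "obstructions f j = obstructions f' j"
proof -
  have "fin_sums_in f {..<j} = fin_sums_in f' {..<j}"
    using assms by (intro fin_sums_in_cong) simp
  moreover from this have "shifted_sums f j = shifted_sums f' j"
    unfolding shifted_sums_def using assms by (intro image_cong) auto
  ultimately show ?thesis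
    unfolding obstructions_def using assms by (intro arg_cong2[where f = "(\<union>)"] image_cong) auto
qed

lemma fin_sums_in_lessThan_cases:
  assumes "s \<in> fin_sums_in f {..<n}"
  shows "s \<in> fin_sums_in f {..<Suc m} \<or> (\<exists>j>m. \<exists>t\<in>fin_sums_in f {..<j}. s = t + f j)"
  using assms
proof (induction n arbitrary: s)
  case 0
  then show ?case
    by (simp add: fin_sums_inI[of "[]", simplified])
next
  case (Suc n)
  show ?case
  proof (cases "s \<in> fin_sums_in f {..<n}")
    case False
    then obtain t where t: "t \<in> fin_sums_in f {..<n}" "s = t + f n"
      using Suc.prems by (auto simp: fin_sums_in_lessThan_Suc)
    show ?thesis
    proof (cases "m < n")
      case False
      then have "s \<in> fin_sums_in f {..<Suc n}"
        using Suc.prems by blast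
      also have "\<dots> \<subseteq> fin_sums_in f {..<Suc m}"
        using False by (intro fin_sums_in_mono) auto
      finally show ?thesis ..
    qed (use t in blast)
  qed (rule Suc.IH)
qed

lemma shifted_sums_entry:
  assumes avoid: "\<And>j. f j \<notin> obstructions f j"
    and "k \<notin> fin_sums_in f UNIV" "k + f m \<in> fin_sums_in f UNIV"
  shows "\<exists>j\<ge>m. k \<in> shifted_sums f (Suc j) \<and> k \<notin> shifted_sums f j"
proof -
  obtain n where "k + f m \<in> fin_sums_in f {..<n}"
    using assms(3) by (auto simp: fin_sums_in_UNIV)
  then consider (below) "k + f m \<in> fin_sums_in f {..<m}"
    | (at) t where "t \<in> fin_sums_in f {..<m}" "k + f m = t + f m"
    | (above) j t where "m < j" "t \<in> fin_sums_in f {..<j}" "k + f m = t + f j"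
    using fin_sums_in_lessThan_cases[of "k + f m" f n m] by (auto simp: fin_sums_in_lessThan_Suc)
  then show ?thesis
  proof cases
    case below
    have "k \<in> shifted_sums f (Suc m)"
      using shifted_sumsI[of "k + f m" f "Suc m" m] below fin_sums_in_mono[of "{..<m}" "{..<Suc m}" f]
      by (auto simp: add.assoc)
    moreover have "k \<notin> shifted_sums f m"
    proof
      assume "k \<in> shifted_sums f m"
      then have "- k + (k + f m) \<in> obstructions f m"
        using below by (rule obstructionsI1)
      with avoid[of m] show False
        by (simp add: add.assoc[symmetric])
    qed
    ultimately show ?thesis
      by blast
  next
    case at
    then have "k \<in> fin_sums_in f UNIV"
      using fin_sums_in_mono[of "{..<m}" UNIV f] by auto
    with assms(2) show ?thesis
      by contradiction
  next
    case above
    have "t + f j \<in> fin_sums_in f {..<Suc j}"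
      using above(2) by (simp add: fin_sums_in_lessThan_Suc)
    then have "k \<in> shifted_sums f (Suc j)"
      using shifted_sumsI[of "t + f j" f "Suc j" m] above(1,3)
      by (metis add_diff_cancel less_Suc_eq)
    moreover have "k \<notin> shifted_sums f j"
    proof
      assume "k \<in> shifted_sums f j"
      then have "- t + k + f m \<in> obstructions f j"
        using above(1,2) by (intro obstructionsI2)
      with avoid[of j] above(3) show False
        by (simp add: add.assoc)
    qed
    ultimately show ?thesis
      using above(1) by (intro exI[of _ j]) simp
  qed
qed

lemma fin_sums_translate_eventually:
  assumes avoid: "\<And>j. f j \<notin> obstructions f j"
  shows "eventually (\<lambda>m. k + f m \<in> fin_sums_in f UNIV \<longleftrightarrow> k \<in> fin_sums_in f UNIV) sequentially"
proof (cases "k \<in> fin_sums_in f UNIV")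
  case True
  then obtain n where n: "k \<in> fin_sums_in f {..<n}"
    by (auto simp: fin_sums_in_UNIV)
  have "k + f m \<in> fin_sums_in f UNIV" if "n \<le> m" for m
  proof -
    have "k \<in> fin_sums_in f {..<m}"
      using n that fin_sums_in_mono[of "{..<n}" "{..<m}" f] by auto
    then have "k + f m \<in> fin_sums_in f {..<Suc m}"
      by (simp add: fin_sums_in_lessThan_Suc)
    then show ?thesis
      using fin_sums_in_mono[of "{..<Suc m}" UNIV f] by blast
  qed
  with True show ?thesis
    unfolding eventually_sequentially by blast
next
  case False
  obtain N where N: "\<forall>t. k \<in> shifted_sums f t \<longrightarrow> k \<in> shifted_sums f N"
    by (cases "\<exists>t. k \<in> shifted_sums f t") auto
  have "k + f m \<notin> fin_sums_in f UNIV" if "N \<le> m" for m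
  proof
    assume "k + f m \<in> fin_sums_in f UNIV"
    then obtain j where "m \<le> j" "k \<in> shifted_sums f (Suc j)" "k \<notin> shifted_sums f j"
      using shifted_sums_entry[OF avoid False] by blast
    then show False
      using N shifted_sums_mono[of N j f] that by auto
  qed
  with False show ?thesis
    unfolding eventually_sequentially by blast
qed

lemma obstruction_avoiding_subsequence:
  fixes g :: "nat \<Rightarrow> 'a::group_add"
  assumes "inj g"
  obtains idx where "strict_mono idx" "\<And>j. g (idx j) \<notin> obstructions (g \<circ> idx) j"
proof -
  have "infinite {n. (\<forall>i<j. idx i < n) \<and> g n \<notin> obstructions (g \<circ> idx) j}"
    for j idx
  proof -
    have "{n. \<not> (\<forall>i<j. idx i < n)} \<subseteq> (\<Union>i<j. {..idx i})"
    proof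
      fix n
      assume "n \<in> {n. \<not> (\<forall>i<j. idx i < n)}"
      then have "\<exists>i<j. n \<le> idx i"
        by (simp add: not_less)
      then show "n \<in> (\<Union>i<j. {..idx i})"
        by auto
    qed
    then have "finite {n. \<not> (\<forall>i<j. idx i < n)}"
      by (rule finite_subset) simp
    moreover have "finite (g -` obstructions (g \<circ> idx) j)"
      using finite_obstructions \<open>inj g\<close> by (rule finite_vimageI)
    ultimately have "finite ({n. \<not> (\<forall>i<j. idx i < n)} \<union> g -` obstructions (g \<circ> idx) j)"
      by (rule finite_UnI)
    then have "infinite (UNIV - ({n. \<not> (\<forall>i<j. idx i < n)} \<union> g -` obstructions (g \<circ> idx) j))"
      by (rule Diff_infinite_finite) simp
    moreover have "UNIV - ({n. \<not> (\<forall>i<j. idx i < n)} \<union> g -` obstructions (g \<circ> idx) j) \<subseteq>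
        {n. (\<forall>i<j. idx i < n) \<and> g n \<notin> obstructions (g \<circ> idx) j}"
      by blast
    ultimately show ?thesis
      by (simp add: infinite_super)
  qed
  then obtain idx where "inj idx" and idx: "\<And>j. (\<forall>i<j. idx i < idx j) \<and> g (idx j) \<notin> obstructions (g \<circ> idx) j"
  proof (rule inj_sequence_choice[where Q = "\<lambda>j idx n. (\<forall>i<j. idx i < n) \<and> g n \<notin> obstructions (g \<circ> idx) j"])
    show "(\<lambda>n. (\<forall>i<j. idx i < n) \<and> g n \<notin> obstructions (g \<circ> idx) j) =
        (\<lambda>n. (\<forall>i<j. idx' i < n) \<and> g n \<notin> obstructions (g \<circ> idx') j)"
      if "\<And>i. i < j \<Longrightarrow> idx i = idx' i" for j idx idx'
      using that obstructions_cong[of j "g \<circ> idx" "g \<circ> idx'"] by auto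
  qed (rule that)
  from idx have "strict_mono idx"
    by (simp add: strict_mono_def)
  moreover have "g (idx j) \<notin> obstructions (g \<circ> idx) j" for j
    using idx by blast
  ultimately show thesis
    by (rule that)
qed

lemma recurrent_in_FP_translate:
  fixes g :: "nat \<Rightarrow> 'a::group_add"
  assumes "inj g" "x \<in> A" and FP: "(\<lambda>y. x + y) ` FP g \<subseteq> A"
  obtains B where "B \<subseteq> A" "x \<in> B" "recurrent B"
proof -
  obtain idx where "strict_mono idx" and avoid: "\<And>j. g (idx j) \<notin> obstructions (g \<circ> idx) j"
    using obstruction_avoiding_subsequence[OF \<open>inj g\<close>] by blast
  define f where "f = g \<circ> idx"
  have avoid_f: "f j \<notin> obstructions f j" for j
    using avoid by (simp add: f_def)
  define B where "B = (\<lambda>d. x + d) ` fin_sums_in f UNIV"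
  have mem_B: "y \<in> B \<longleftrightarrow> - x + y \<in> fin_sums_in f UNIV" for y
    unfolding B_def by (auto simp: add.assoc[symmetric] intro!: image_eqI[where x = "- x + y"])
  have "fin_sums_in f UNIV \<subseteq> insert 0 (FP g)"
    using fin_sums_in_comp_strict_mono[OF \<open>strict_mono idx\<close>, of g UNIV] fin_sums_in_subset_FP
    unfolding f_def by blast
  then have "x + d \<in> A" if "d \<in> fin_sums_in f UNIV" for d
    using that \<open>x \<in> A\<close> FP by (auto simp: image_subset_iff)
  then have "B \<subseteq> A"
    unfolding B_def by blast
  moreover have "x \<in> B"
    using fin_sums_inI[of "[]" UNIV f] by (simp add: mem_B)
  moreover have "recurrent B"
    unfolding recurrent_iff_finite_agreement
  proof (intro allI impI)
    fix K :: "'a set"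
    assume "finite K"
    moreover have "eventually (\<lambda>m. (k \<in> rtrans B (- f m)) = (k \<in> B)) sequentially" for k
      using fin_sums_translate_eventually[OF avoid_f, of "- x + k"]
      by (simp add: mem_rtrans mem_B add.assoc)
    ultimately have "eventually (\<lambda>m. \<forall>k\<in>K. (k \<in> rtrans B (- f m)) = (k \<in> B)) sequentially"
      by (simp add: eventually_ball_finite_distrib)
    then obtain N where N: "\<forall>m\<ge>N. \<forall>k\<in>K. (k \<in> rtrans B (- f m)) = (k \<in> B)"
      unfolding eventually_sequentially ..
    have "inj f"
      unfolding f_def using \<open>inj g\<close> strict_mono_imp_inj_on[OF \<open>strict_mono idx\<close>] by (rule inj_compose)
    have "inj_on (\<lambda>m. - f m) {N..}"
    proof (rule inj_onI)
      fix m m'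
      assume "- f m = - f m'"
      then show "m = m'"
        using \<open>inj f\<close> by (simp add: inj_eq)
    qed
    then have "infinite ((\<lambda>m. - f m) ` {N..})"
      using finite_imageD[of "\<lambda>m. - f m" "{N..}"] infinite_Ici[of N] by auto
    moreover have "(\<lambda>m. - f m) ` {N..} \<subseteq> {g. \<forall>k\<in>K. (k \<in> rtrans B g) = (k \<in> B)}"
    proof (rule image_subsetI)
      fix m
      assume "m \<in> {N..}"
      then show "- f m \<in> {g. \<forall>k\<in>K. (k \<in> rtrans B g) = (k \<in> B)}"
        using N by simp
    qed
    ultimately show "infinite {g. \<forall>k\<in>K. (k \<in> rtrans B g) = (k \<in> B)}"
      by (rule infinite_super[rotated])
  qed
  ultimately show thesis
    by (rule that)
qed

lemma contains_recurrent_iff: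
  fixes A :: "'a::group_add set"
  shows "(\<exists>B. B \<subseteq> A \<and> B \<noteq> {} \<and> recurrent B) \<longleftrightarrow>
    (\<exists>x\<in>A. \<exists>g::nat \<Rightarrow> 'a. inj g \<and> (\<lambda>y. x + y) ` FP g \<subseteq> A)"
proof
  assume "\<exists>B. B \<subseteq> A \<and> B \<noteq> {} \<and> recurrent B"
  then obtain B x where "B \<subseteq> A" "x \<in> B" "recurrent B"
    by blast
  moreover from calculation obtain h where "inj h" "(\<lambda>y. x + y) ` FP h \<subseteq> B"
    by (meson FP_translate_in_recurrent)
  ultimately show "\<exists>x\<in>A. \<exists>g::nat \<Rightarrow> 'a. inj g \<and> (\<lambda>y. x + y) ` FP g \<subseteq> A"
    by blast
next
  assume "\<exists>x\<in>A. \<exists>g::nat \<Rightarrow> 'a. inj g \<and> (\<lambda>y. x + y) ` FP g \<subseteq> A"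
  then obtain x g where "x \<in> A" "inj g" and FP: "(\<lambda>y. x + y) ` FP g \<subseteq> A"
    by blast
  obtain B where "B \<subseteq> A" "x \<in> B" "recurrent B"
    by (rule recurrent_in_FP_translate[OF \<open>inj g\<close> \<open>x \<in> A\<close> FP])
  then show "\<exists>B. B \<subseteq> A \<and> B \<noteq> {} \<and> recurrent B"
    by blast
qed

theorem theorem4p3:
  fixes A :: "'a::group_add set"
  assumes "infinite (UNIV :: 'a set)"
  shows "(\<forall>n::nat. \<not> n_thin n A \<longleftrightarrow>
            (\<exists>F (x::nat \<Rightarrow> 'a). finite F \<and> card F = Suc n \<and> inj x \<and>
                (\<forall>k. (\<lambda>f. f + x k) ` F \<subseteq> A)))
      \<and> (\<not> sparse A \<longleftrightarrow>
            (\<exists>(x::nat \<Rightarrow> 'a) y. inj x \<and> inj y \<and> (\<forall>n m. n \<le> m \<longrightarrow> x n + y m \<in> A)))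
      \<and> (\<not> scattered A \<longleftrightarrow> (\<exists>(g::nat \<Rightarrow> 'a) b. inj g \<and> PSFP g b \<subseteq> A))
      \<and> ((\<exists>B. B \<subseteq> A \<and> B \<noteq> {} \<and> recurrent B) \<longleftrightarrow>
            (\<exists>x\<in>A. \<exists>g::nat \<Rightarrow> 'a. inj g \<and> (\<lambda>y. x + y) ` FP g \<subseteq> A))"
proof (intro conjI allI)
  show "\<not> n_thin n A \<longleftrightarrow> (\<exists>F (x::nat \<Rightarrow> 'a). finite F \<and> card F = Suc n \<and> inj x \<and>
      (\<forall>k. (\<lambda>f. f + x k) ` F \<subseteq> A))" for n
    by (rule not_n_thin_iff)
qed (rule not_sparse_iff not_scattered_iff contains_recurrent_iff)+

end
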